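(* Suppose $\sigma$ is an automorphism of the division ring $D$ and the skew polynomial ring $R=D[t;\sigma,\delta]$ is simple. Then there is no monic $f\in R$ of degree $m\ge 2$ such that $S_f$ is nonassociative and $D\subseteq \mathrm{Nuc}_r(S_f)$. In particular, there is no such $f$ with $S_f$ nonassociative and $D\subseteq\mathrm{Nuc}(S_f)$.
   Context: $D$ is an associative division ring, $\sigma$ a ring endomorphism of $D$, $\delta$ a left $\sigma$-derivation ($\delta$ additive, $\delta(ab)=\sigma(a)\delta(b)+\delta(a)b$). $R=D[t;\sigma,\delta]$ is the skew polynomial ring with $ta=\sigma(a)t+\delta(a)$. For monic $f\in R$ of degree $m$, $S_f$ denotes the set of polynomials of degree $<m$ with multiplication $g\circ h=$ remainder of $gh$ upon right division by $f$ (i.e. $gh=qf+r$, $\deg r<m$, and $g\circ h=r$). Associator $[x,y,z]=(xy)z-x(yz)$; $\mathrm{Nuc}_r(A)=\{x:[A,A,x]=0\}$, and $\mathrm{Nuc}(A)$ is the set of $x$ with $[x,A,A]=[A,x,A]=[A,A,x]=0$. $D$ is identified with the constant polynomials in $S_f$. *)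

theory Defs
  imports "HOL-Computational_Algebra.Polynomial"
begin

text \<open>Skew polynomials D[t;sigma,delta] over a division ring D (a type of class
division_ring) are represented by their coefficient polynomials in 'a poly
(coefficient i is the coefficient of t^i, coefficients written on the left).
Only the additive structure of 'a poly is used; the skew multiplication is
defined below from the rule t a = sigma(a) t + delta(a).\<close>

definition ring_endo :: "('a::division_ring \<Rightarrow> 'a) \<Rightarrow> bool" where
  "ring_endo \<sigma> \<longleftrightarrow> (\<forall>a b. \<sigma> (a + b) = \<sigma> a + \<sigma> b) \<and> (\<forall>a b. \<sigma> (a * b) = \<sigma> a * \<sigma> b) \<and> \<sigma> 1 = 1"

definition ring_auto :: "('a::division_ring \<Rightarrow> 'a) \<Rightarrow> bool" where
  "ring_auto \<sigma> \<longleftrightarrow> ring_endo \<sigma> \<and> bij \<sigma>"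

definition left_sigma_derivation :: "('a::division_ring \<Rightarrow> 'a) \<Rightarrow> ('a \<Rightarrow> 'a) \<Rightarrow> bool" where
  "left_sigma_derivation \<sigma> \<delta> \<longleftrightarrow> (\<forall>a b. \<delta> (a + b) = \<delta> a + \<delta> b) \<and>
     (\<forall>a b. \<delta> (a * b) = \<sigma> a * \<delta> b + \<delta> a * b)"

text \<open>Left multiplication by t: t (sum c_i t^i) = sum (sigma(c_i) t^(i+1) + delta(c_i) t^i).\<close>
definition tmul :: "('a::division_ring \<Rightarrow> 'a) \<Rightarrow> ('a \<Rightarrow> 'a) \<Rightarrow> 'a poly \<Rightarrow> 'a poly" where
  "tmul \<sigma> \<delta> p = pCons 0 (map_poly \<sigma> p) + map_poly \<delta> p"

definition lscal :: "'a::division_ring \<Rightarrow> 'a poly \<Rightarrow> 'a poly" where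
  "lscal c p = map_poly (\<lambda>x. c * x) p"

definition tshift :: "nat \<Rightarrow> 'a::zero poly \<Rightarrow> 'a poly" where
  "tshift j p = ((pCons 0) ^^ j) p"

text \<open>Skew product: (a t^i)(b t^j) = a (t^i b) t^j, extended bilinearly.\<close>
definition skew_mult :: "('a::division_ring \<Rightarrow> 'a) \<Rightarrow> ('a \<Rightarrow> 'a) \<Rightarrow> 'a poly \<Rightarrow> 'a poly \<Rightarrow> 'a poly" where
  "skew_mult \<sigma> \<delta> p q = (\<Sum>i\<le>degree p. \<Sum>j\<le>degree q.
      lscal (coeff p i) (tshift j ((tmul \<sigma> \<delta> ^^ i) [:coeff q j:])))"

definition skew_rem :: "('a::division_ring \<Rightarrow> 'a) \<Rightarrow> ('a \<Rightarrow> 'a) \<Rightarrow> 'a poly \<Rightarrow> 'a poly \<Rightarrow> 'a poly" where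
  "skew_rem \<sigma> \<delta> g f = (THE r. degree r < degree f \<and> (\<exists>q. g = skew_mult \<sigma> \<delta> q f + r))"

definition Sf_carrier :: "'a::division_ring poly \<Rightarrow> 'a poly set" where
  "Sf_carrier f = {g. degree g < degree f}"

definition Sf_mult :: "('a::division_ring \<Rightarrow> 'a) \<Rightarrow> ('a \<Rightarrow> 'a) \<Rightarrow> 'a poly \<Rightarrow> 'a poly \<Rightarrow> 'a poly \<Rightarrow> 'a poly" where
  "Sf_mult \<sigma> \<delta> f g h = skew_rem \<sigma> \<delta> (skew_mult \<sigma> \<delta> g h) f"

definition Sf_assoc :: "('a::division_ring \<Rightarrow> 'a) \<Rightarrow> ('a \<Rightarrow> 'a) \<Rightarrow> 'a poly \<Rightarrow> 'a poly \<Rightarrow> 'a poly \<Rightarrow> 'a poly \<Rightarrow> 'a poly" where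
  "Sf_assoc \<sigma> \<delta> f x y z = Sf_mult \<sigma> \<delta> f (Sf_mult \<sigma> \<delta> f x y) z - Sf_mult \<sigma> \<delta> f x (Sf_mult \<sigma> \<delta> f y z)"

definition Sf_nonassoc :: "('a::division_ring \<Rightarrow> 'a) \<Rightarrow> ('a \<Rightarrow> 'a) \<Rightarrow> 'a poly \<Rightarrow> bool" where
  "Sf_nonassoc \<sigma> \<delta> f \<longleftrightarrow> (\<exists>x\<in>Sf_carrier f. \<exists>y\<in>Sf_carrier f. \<exists>z\<in>Sf_carrier f. Sf_assoc \<sigma> \<delta> f x y z \<noteq> 0)"

definition Sf_right_nucleus :: "('a::division_ring \<Rightarrow> 'a) \<Rightarrow> ('a \<Rightarrow> 'a) \<Rightarrow> 'a poly \<Rightarrow> 'a poly set" where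
  "Sf_right_nucleus \<sigma> \<delta> f = {x \<in> Sf_carrier f. \<forall>a\<in>Sf_carrier f. \<forall>b\<in>Sf_carrier f. Sf_assoc \<sigma> \<delta> f a b x = 0}"

definition Sf_nucleus :: "('a::division_ring \<Rightarrow> 'a) \<Rightarrow> ('a \<Rightarrow> 'a) \<Rightarrow> 'a poly \<Rightarrow> 'a poly set" where
  "Sf_nucleus \<sigma> \<delta> f = {x \<in> Sf_carrier f. \<forall>a\<in>Sf_carrier f. \<forall>b\<in>Sf_carrier f.
      Sf_assoc \<sigma> \<delta> f x a b = 0 \<and> Sf_assoc \<sigma> \<delta> f a x b = 0 \<and> Sf_assoc \<sigma> \<delta> f a b x = 0}"

definition skew_ideal :: "('a::division_ring \<Rightarrow> 'a) \<Rightarrow> ('a \<Rightarrow> 'a) \<Rightarrow> 'a poly set \<Rightarrow> bool" where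
  "skew_ideal \<sigma> \<delta> I \<longleftrightarrow> 0 \<in> I \<and> (\<forall>x\<in>I. \<forall>y\<in>I. x - y \<in> I) \<and>
     (\<forall>x\<in>I. \<forall>r. skew_mult \<sigma> \<delta> r x \<in> I \<and> skew_mult \<sigma> \<delta> x r \<in> I)"

definition skew_simple :: "('a::division_ring \<Rightarrow> 'a) \<Rightarrow> ('a \<Rightarrow> 'a) \<Rightarrow> bool" where
  "skew_simple \<sigma> \<delta> \<longleftrightarrow> (\<forall>I. skew_ideal \<sigma> \<delta> I \<longrightarrow> I = {0} \<or> I = UNIV)"

end

theory Submission
  imports Defs
begin

text \<open>If D lies in the right nucleus of S_f and m = deg f \<ge> 2, evaluating the associator
  [t^(m-1), t, c] shows f c \<in> R f for every c \<in> D: f is right semi-invariant. The bound of f,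
  the set of p with p R \<subseteq> R f, is a two-sided ideal not containing 1, so it is zero when R is
  simple. But it is not zero: the tuples (t^j t^i mod f) over i < m, for j = 0, ..., m^2, are
  m^2 + 1 vectors in an m^2-dimensional left D-space, so some p \<noteq> 0 has p t^i \<in> R f for all
  i < m. As \<sigma> is surjective, every remainder mod f is a sum of terms t^i d, and semi-invariance
  gives p t^i d \<in> R f d \<subseteq> R f, so p lies in the bound.\<close>

lemma left_linear_dependence:
  fixes v :: "'b \<Rightarrow> nat \<Rightarrow> 'a::division_ring"
  assumes "finite J" and "K < card J" and "\<forall>j\<in>J. \<forall>k\<ge>K. v j k = 0"
  shows "\<exists>c. (\<exists>j\<in>J. c j \<noteq> 0) \<and> (\<forall>k. (\<Sum>j\<in>J. c j * v j k) = 0)"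
  using assms
proof (induction K arbitrary: J v)
  case 0
  then obtain j where "j \<in> J" by fastforce
  then show ?case using 0 by (intro exI[of _ "\<lambda>_. 1"]) auto
next
  case (Suc K)
  show ?case
  proof (cases "\<forall>j\<in>J. v j K = 0")
    case True
    then have "\<forall>j\<in>J. \<forall>k\<ge>K. v j k = 0"
      using Suc.prems(3) by (metis Suc_le_eq le_eq_less_or_eq)
    with Suc.IH[of J v] Suc.prems show ?thesis by auto
  next
    case False
    then obtain j0 where j0: "j0 \<in> J" "v j0 K \<noteq> 0" by auto
    define ratio where "ratio j = v j K * inverse (v j0 K)" for j
    \<comment> \<open>Eliminating coordinate K with v j0 leaves card J - 1 vectors supported below K.\<close>
    define w where "w j k = v j k - ratio j * v j0 k" for j k
    have "\<forall>j\<in>J - {j0}. \<forall>k\<ge>K. w j k = 0"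
    proof (intro ballI allI impI)
      fix j k assume "j \<in> J - {j0}" "K \<le> k"
      then show "w j k = 0"
        using Suc.prems(3) j0 by (cases "k = K") (simp_all add: w_def ratio_def mult.assoc)
    qed
    moreover have "K < card (J - {j0})"
      using Suc.prems j0 by simp
    ultimately obtain c where c: "\<exists>j\<in>J - {j0}. c j \<noteq> 0"
      and c_w: "\<forall>k. (\<Sum>j\<in>J - {j0}. c j * w j k) = 0"
      using Suc.IH[of "J - {j0}" w] Suc.prems(1) by blast
    define S where "S = (\<Sum>j\<in>J - {j0}. c j * ratio j)"
    have "(\<Sum>j\<in>J. (c(j0 := - S)) j * v j k) = 0" for k
    proof -
      have "(\<Sum>j\<in>J - {j0}. c j * v j k) - S * v j0 k = (\<Sum>j\<in>J - {j0}. c j * w j k)"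
        by (simp add: S_def w_def right_diff_distrib mult.assoc sum_subtractf sum_distrib_right)
      moreover have "(\<Sum>j\<in>J. (c(j0 := - S)) j * v j k)
          = - S * v j0 k + (\<Sum>j\<in>J - {j0}. c j * v j k)"
        using Suc.prems(1) j0 by (simp add: sum.remove)
      ultimately show ?thesis
        using c_w by simp
    qed
    with c show ?thesis by (intro exI[of _ "c(j0 := - S)"]) auto
  qed
qed

lemma coeff_lscal [simp]: "coeff (lscal c p) n = c * coeff p n"
  unfolding lscal_def by (simp add: coeff_map_poly)

lemma lscal_add: "lscal c (p + q) = lscal c p + lscal c q"
  by (rule poly_eqI) (simp add: distrib_left)

lemma lscal_0 [simp]: "lscal c 0 = 0"
  by (rule poly_eqI) simp

lemma lscal_0_left [simp]: "lscal 0 p = 0"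
  by (rule poly_eqI) simp

lemma lscal_1 [simp]: "lscal 1 p = p"
  by (rule poly_eqI) simp

lemma lscal_lscal: "lscal a (lscal b p) = lscal (a * b) p"
  by (rule poly_eqI) (simp add: mult.assoc)

lemma lscal_add_left: "lscal (a + b) p = lscal a p + lscal b p"
  by (rule poly_eqI) (simp add: distrib_right)

lemma lscal_sum: "lscal c (sum g A) = (\<Sum>i\<in>A. lscal c (g i))"
  by (rule poly_eqI) (simp add: coeff_sum sum_distrib_left)

lemma degree_lscal_le: "degree (lscal c p) \<le> degree p"
  by (rule degree_le) (simp add: coeff_eq_0)

lemma tshift_const: "tshift j [:c:] = monom c j"
  unfolding tshift_def by (induct j) (simp_all add: monom_Suc monom_0)

lemma degree_less_if_top_coeff_0:
  "degree p \<le> n \<Longrightarrow> coeff p n = 0 \<Longrightarrow> 0 < n \<Longrightarrow> degree p < n"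
  by (metis le_neq_implies_less leading_coeff_0_iff degree_0)

locale skew_poly_ring =
  fixes \<sigma> \<delta> :: "'a::division_ring \<Rightarrow> 'a"
  assumes endo: "ring_endo \<sigma>" and deriv: "left_sigma_derivation \<sigma> \<delta>"
begin

abbreviation T :: "'a poly \<Rightarrow> 'a poly" where "T \<equiv> tmul \<sigma> \<delta>"

abbreviation skew_times :: "'a poly \<Rightarrow> 'a poly \<Rightarrow> 'a poly" (infixl "\<star>" 70)
  where "p \<star> q \<equiv> skew_mult \<sigma> \<delta> p q"

lemma sigma_add: "\<sigma> (a + b) = \<sigma> a + \<sigma> b"
  and sigma_mult: "\<sigma> (a * b) = \<sigma> a * \<sigma> b"
  and sigma_1 [simp]: "\<sigma> 1 = 1"
  using endo unfolding ring_endo_def by auto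

lemma sigma_0 [simp]: "\<sigma> 0 = 0"
  using sigma_add[of 0 0] by simp

lemma sigma_funpow_1 [simp]: "(\<sigma> ^^ k) 1 = 1"
  by (induct k) simp_all

lemma delta_add: "\<delta> (a + b) = \<delta> a + \<delta> b"
  and delta_mult: "\<delta> (a * b) = \<sigma> a * \<delta> b + \<delta> a * b"
  using deriv unfolding left_sigma_derivation_def by auto

lemma delta_0 [simp]: "\<delta> 0 = 0"
  using delta_add[of 0 0] by simp

lemma delta_1 [simp]: "\<delta> 1 = 0"
  using delta_mult[of 1 1] by simp

lemma coeff_tmul: "coeff (T p) n = (case n of 0 \<Rightarrow> 0 | Suc k \<Rightarrow> \<sigma> (coeff p k)) + \<delta> (coeff p n)"
  unfolding tmul_def by (simp add: coeff_map_poly coeff_pCons split: nat.split)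

lemma tmul_add: "T (p + q) = T p + T q"
  by (rule poly_eqI) (simp add: coeff_tmul sigma_add delta_add split: nat.split)

lemma tmul_0 [simp]: "T 0 = 0"
  by (rule poly_eqI) (simp add: coeff_tmul split: nat.split)

lemma tmul_lscal: "T (lscal c x) = lscal (\<sigma> c) (T x) + lscal (\<delta> c) x"
  by (rule poly_eqI) (simp add: coeff_tmul sigma_mult delta_mult distrib_left split: nat.split)

lemma tmul_pCons: "T (pCons a q) = pCons (\<delta> a) (T q + [:\<sigma> a:])"
  by (rule poly_eqI) (simp add: coeff_tmul coeff_pCons split: nat.split)

lemma tmul_monom_1: "T (monom 1 j) = monom 1 (Suc j)"
  by (rule poly_eqI) (simp add: coeff_tmul split: nat.split)

lemma funpow_tmul_add: "(T ^^ k) (p + q) = (T ^^ k) p + (T ^^ k) q"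
  by (induct k) (simp_all add: tmul_add)

lemma funpow_tmul_0 [simp]: "(T ^^ k) 0 = 0"
  by (induct k) simp_all

lemma funpow_tmul_sum: "(T ^^ k) (sum g A) = (\<Sum>i\<in>A. (T ^^ k) (g i))"
  by (induct A rule: infinite_finite_induct) (simp_all add: funpow_tmul_add)

lemma funpow_tmul_tshift: "(T ^^ i) (tshift j y) = tshift j ((T ^^ i) y)"
proof -
  have "T (pCons 0 y) = pCons 0 (T y)" for y
    by (rule poly_eqI) (simp add: coeff_tmul coeff_pCons split: nat.split)
  then have "T ((pCons 0 ^^ j) y) = (pCons 0 ^^ j) (T y)" for y
    by (induct j) simp_all
  then show ?thesis
    unfolding tshift_def by (induct i) simp_all
qed

lemma funpow_tmul_degree:
  assumes "degree x \<le> n"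
  shows "degree ((T ^^ k) x) \<le> n + k \<and> coeff ((T ^^ k) x) (n + k) = (\<sigma> ^^ k) (coeff x n)"
proof (induct k)
  case (Suc k)
  then show ?case
    by (auto intro!: degree_le simp: coeff_tmul coeff_eq_0 split: nat.split)
qed (use assms in simp)

lemma skew_mult_eq: "p \<star> x = (\<Sum>i\<le>degree p. lscal (coeff p i) ((T ^^ i) x))"
proof -
  have "(\<Sum>j\<le>degree x. tshift j ((T ^^ i) [:coeff x j:])) = (T ^^ i) x" for i
    using funpow_tmul_sum[of i "\<lambda>j. monom (coeff x j) j" "{..degree x}"]
    by (simp add: funpow_tmul_tshift[symmetric] tshift_const poly_as_sum_of_monoms)
  then show ?thesis
    unfolding skew_mult_def by (simp add: lscal_sum[symmetric])
qed

lemma skew_mult_eq_bound: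
  "degree p < N \<Longrightarrow> p \<star> x = (\<Sum>i<N. lscal (coeff p i) ((T ^^ i) x))"
  unfolding skew_mult_eq by (rule sum.mono_neutral_left) (auto simp: coeff_eq_0)

lemma skew_mult_0_left [simp]: "0 \<star> x = 0"
  by (simp add: skew_mult_eq)

lemma skew_mult_0_right [simp]: "p \<star> 0 = 0"
  by (simp add: skew_mult_eq)

lemma skew_mult_add_left: "(p + q) \<star> x = p \<star> x + q \<star> x"
proof -
  define N where "N = Suc (max (degree p) (degree q))"
  have "degree (p + q) < N"
    unfolding N_def by (meson degree_add_le le_imp_less_Suc max.cobounded1 max.cobounded2)
  then show ?thesis
    by (simp add: skew_mult_eq_bound[of _ N] N_def lscal_add_left sum.distrib less_Suc_eq_le)
qed

lemma skew_mult_diff_left: "(p - q) \<star> x = p \<star> x - q \<star> x"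
  using skew_mult_add_left[of "p - q" q x] by (simp add: algebra_simps)

lemma skew_mult_sum_left: "sum g A \<star> x = (\<Sum>i\<in>A. g i \<star> x)"
  by (induct A rule: infinite_finite_induct) (simp_all add: skew_mult_add_left)

lemma skew_mult_add_right: "p \<star> (x + y) = p \<star> x + p \<star> y"
  unfolding skew_mult_eq by (simp add: funpow_tmul_add lscal_add sum.distrib)

lemma skew_mult_pCons_left: "pCons a p \<star> x = lscal a x + p \<star> T x"
proof -
  have "degree (pCons a p) < Suc (Suc (degree p))"
    using degree_pCons_le[of a p] by simp
  then have "pCons a p \<star> x = (\<Sum>i<Suc (Suc (degree p)). lscal (coeff (pCons a p) i) ((T ^^ i) x))"
    by (rule skew_mult_eq_bound)
  also have "\<dots> = lscal a x + (\<Sum>i<Suc (degree p). lscal (coeff p i) ((T ^^ i) (T x)))"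
    by (subst sum.lessThan_Suc_shift) (simp add: funpow_swap1 del: sum.lessThan_Suc)
  also have "(\<Sum>i<Suc (degree p). lscal (coeff p i) ((T ^^ i) (T x))) = p \<star> T x"
    by (rule skew_mult_eq_bound[symmetric]) simp
  finally show ?thesis .
qed

lemma skew_mult_const_left: "[:c:] \<star> x = lscal c x"
  by (simp add: skew_mult_pCons_left)

lemma skew_mult_monom_left: "monom c k \<star> x = lscal c ((T ^^ k) x)"
  by (induct k arbitrary: x) (simp_all add: monom_0 monom_Suc skew_mult_const_left
      skew_mult_pCons_left funpow_swap1)

lemma skew_mult_lscal_left: "lscal c p \<star> x = lscal c (p \<star> x)"
proof -
  have "degree (lscal c p) < Suc (degree p)"
    using degree_lscal_le le_imp_less_Suc by blast
  then show ?thesis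
    by (simp add: skew_mult_eq_bound skew_mult_eq_bound[of p "Suc (degree p)"] lscal_sum
        lscal_lscal del: sum.lessThan_Suc)
qed

lemma tmul_skew_mult: "T (q \<star> x) = T q \<star> x"
  by (induct q arbitrary: x) (simp_all add: skew_mult_pCons_left tmul_pCons tmul_add
      tmul_lscal skew_mult_add_left skew_mult_const_left algebra_simps)

lemma skew_mult_assoc: "p \<star> q \<star> x = p \<star> (q \<star> x)"
  by (induct p arbitrary: q) (simp_all add: skew_mult_pCons_left skew_mult_add_left
      skew_mult_lscal_left tmul_skew_mult)

lemma degree_skew_mult_le: "degree (p \<star> x) \<le> degree p + degree x"
proof (rule degree_le, intro allI impI)
  fix n assume n: "degree p + degree x < n"
  have "coeff ((T ^^ i) x) n = 0" if "i \<le> degree p" for i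
    using funpow_tmul_degree[of x "degree x" i] that n by (intro coeff_eq_0) simp
  then show "coeff (p \<star> x) n = 0"
    by (simp add: skew_mult_eq coeff_sum)
qed

lemma skew_mult_sum_right: "p \<star> sum g A = (\<Sum>i\<in>A. p \<star> g i)"
  by (induct A rule: infinite_finite_induct) (simp_all add: skew_mult_add_right)

lemma skew_mult_monom_1: "monom 1 i \<star> monom 1 j = monom 1 (i + j)"
proof -
  have "(T ^^ i) (monom 1 j) = monom 1 (i + j)"
    by (induct i) (simp_all add: tmul_monom_1)
  then show ?thesis
    by (simp add: skew_mult_monom_left)
qed

definition principal_left_ideal :: "'a poly \<Rightarrow> 'a poly set" where
  "principal_left_ideal f = range (\<lambda>s. s \<star> f)"

lemma principal_left_ideal_0 [simp]: "0 \<in> principal_left_ideal f"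
  unfolding principal_left_ideal_def by (metis rangeI skew_mult_0_left)

lemma principal_left_ideal_add:
  "g \<in> principal_left_ideal f \<Longrightarrow> h \<in> principal_left_ideal f \<Longrightarrow> g + h \<in> principal_left_ideal f"
  unfolding principal_left_ideal_def by (auto simp: skew_mult_add_left[symmetric])

lemma principal_left_ideal_diff:
  "g \<in> principal_left_ideal f \<Longrightarrow> h \<in> principal_left_ideal f \<Longrightarrow> g - h \<in> principal_left_ideal f"
  unfolding principal_left_ideal_def by (auto simp: skew_mult_diff_left[symmetric])

lemma principal_left_ideal_sum:
  "(\<And>i. i \<in> A \<Longrightarrow> g i \<in> principal_left_ideal f) \<Longrightarrow> sum g A \<in> principal_left_ideal f"
  by (induct A rule: infinite_finite_induct) (simp_all add: principal_left_ideal_add)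

lemma principal_left_ideal_skew_mult:
  "g \<in> principal_left_ideal f \<Longrightarrow> r \<star> g \<in> principal_left_ideal f"
  unfolding principal_left_ideal_def by (auto simp: skew_mult_assoc[symmetric])

lemma skew_mult_in_principal_left_ideal [simp]: "s \<star> f \<in> principal_left_ideal f"
  unfolding principal_left_ideal_def by simp

text \<open>The bound of f: the largest two-sided ideal of R contained in R f.\<close>
definition bound :: "'a poly \<Rightarrow> 'a poly set" where
  "bound f = {p. \<forall>y. p \<star> y \<in> principal_left_ideal f}"

lemma skew_ideal_bound: "skew_ideal \<sigma> \<delta> (bound f)"
  unfolding skew_ideal_def bound_def
  by (auto simp: skew_mult_diff_left skew_mult_assoc principal_left_ideal_diff
      principal_left_ideal_skew_mult)

text \<open>For monic f, comparing degrees shows this is the usual condition f D \<subseteq> D f.\<close>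
definition right_semi_invariant :: "'a poly \<Rightarrow> bool" where
  "right_semi_invariant f \<longleftrightarrow> (\<forall>c. f \<star> [:c:] \<in> principal_left_ideal f)"

lemma exists_right_coeffs:
  assumes "surj \<sigma>" and "\<forall>i\<ge>N. coeff r i = 0"
  shows "\<exists>d. r = (\<Sum>i<N. monom 1 i \<star> [:d i:])"
  using assms(2)
proof (induction N arbitrary: r)
  case 0
  then have "r = 0" by (intro poly_eqI) simp
  then show ?case by simp
next
  case (Suc N)
  obtain e where e: "(\<sigma> ^^ N) e = coeff r N"
    using surj_fn[OF assms(1)] by (metis surjD)
  have t_e: "monom 1 N \<star> [:e:] = (T ^^ N) [:e:]"
    by (simp add: skew_mult_monom_left)
  have deg_e: "degree ((T ^^ N) [:e:]) \<le> N" "coeff ((T ^^ N) [:e:]) N = coeff r N"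
    using funpow_tmul_degree[of "[:e:]" 0 N] e by simp_all
  have "coeff (r - monom 1 N \<star> [:e:]) i = 0" if "N \<le> i" for i
  proof (cases "i = N")
    case False
    then show ?thesis
      using that Suc.prems deg_e(1) by (simp add: t_e coeff_eq_0)
  qed (simp add: t_e deg_e)
  then obtain d where "r - monom 1 N \<star> [:e:] = (\<Sum>i<N. monom 1 i \<star> [:d i:])"
    using Suc.IH by blast
  then have "r = (\<Sum>i<Suc N. monom 1 i \<star> [:(d(N := e)) i:])"
    by (simp add: algebra_simps)
  then show ?case by blast
qed

end

locale skew_poly_monic = skew_poly_ring +
  fixes f :: "'a poly"
  assumes monic: "lead_coeff f = 1" and degree_pos: "0 < degree f"
begin

lemma funpow_tmul_monic: "degree ((T ^^ k) f) \<le> degree f + k \<and> coeff ((T ^^ k) f) (degree f + k) = 1"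
  using funpow_tmul_degree[of f "degree f" k] monic by simp

lemma degree_skew_mult_monic:
  assumes "s \<noteq> 0"
  shows "degree (s \<star> f) = degree s + degree f"
proof -
  define d where "d = degree s"
  have "coeff ((T ^^ i) f) (d + degree f) = 0" if "i < d" for i
    using funpow_tmul_monic[of i] that by (intro coeff_eq_0) simp
  moreover have "{..d} = insert d {..<d}"
    by auto
  ultimately have "coeff (s \<star> f) (d + degree f) = coeff s d * coeff ((T ^^ d) f) (d + degree f)"
    by (simp add: skew_mult_eq coeff_sum d_def)
  then have "coeff (s \<star> f) (d + degree f) \<noteq> 0"
    using funpow_tmul_monic[of d] assms by (simp add: d_def add.commute)
  then show ?thesis
    using degree_skew_mult_le[of s f] le_degree d_def by (metis le_antisym)
qed

lemma skew_division_exists: "\<exists>q r. degree r < degree f \<and> g = q \<star> f + r"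
proof (induction "degree g" arbitrary: g rule: less_induct)
  case less
  show ?case
  proof (cases "degree g < degree f")
    case True
    then show ?thesis by (intro exI[of _ 0] exI[of _ g]) simp
  next
    case False
    define n where "n = degree g"
    define q where "q = monom (lead_coeff g) (n - degree f)"
    have n: "degree f + (n - degree f) = n" "0 < n"
      using False degree_pos n_def by auto
    have "degree (q \<star> f) \<le> n" "coeff (q \<star> f) n = lead_coeff g"
      using funpow_tmul_monic[of "n - degree f"] n degree_lscal_le order_trans
      by (fastforce simp: q_def skew_mult_monom_left)+
    then have "degree (g - q \<star> f) < degree g"
      using n by (intro degree_less_if_top_coeff_0) (auto simp: n_def degree_diff_le)
    then obtain q' r where "degree r < degree f" "g - q \<star> f = q' \<star> f + r"
      using less by blast
    then show ?thesis
      by (intro exI[of _ "q' + q"] exI[of _ r]) (simp add: skew_mult_add_left algebra_simps)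
  qed
qed

lemma skew_rem_eqI:
  assumes "degree r < degree f" and "g = q \<star> f + r"
  shows "skew_rem \<sigma> \<delta> g f = r"
  unfolding skew_rem_def
proof (rule the_equality)
  show "degree r < degree f \<and> (\<exists>q. g = q \<star> f + r)"
    using assms by blast
next
  fix r' assume "degree r' < degree f \<and> (\<exists>q. g = q \<star> f + r')"
  then obtain q' where r': "degree r' < degree f" "g = q' \<star> f + r'"
    by blast
  have "(q - q') \<star> f = r' - r"
    using assms(2) r'(2) by (simp add: skew_mult_diff_left algebra_simps)
  moreover have "degree (r' - r) < degree f"
    using assms(1) r'(1) degree_diff_le_max[of r' r] by linarith
  ultimately show "r' = r"
    using degree_skew_mult_monic[of "q - q'"] by force
qed

lemma degree_skew_rem: "degree (skew_rem \<sigma> \<delta> g f) < degree f"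
  and skew_rem_decomp: "\<exists>q. g = q \<star> f + skew_rem \<sigma> \<delta> g f"
  using skew_division_exists[of g] skew_rem_eqI by metis+

lemma skew_rem_small: "degree g < degree f \<Longrightarrow> skew_rem \<sigma> \<delta> g f = g"
  by (rule skew_rem_eqI[where q = 0]) simp_all

lemma skew_rem_eq_0_iff: "skew_rem \<sigma> \<delta> g f = 0 \<longleftrightarrow> g \<in> principal_left_ideal f"
  using skew_rem_decomp[of g] skew_rem_eqI[of 0 g] degree_pos
  unfolding principal_left_ideal_def by auto

lemma skew_rem_add:
  "skew_rem \<sigma> \<delta> (g + h) f = skew_rem \<sigma> \<delta> g f + skew_rem \<sigma> \<delta> h f"
proof -
  obtain q q' where rem: "skew_rem \<sigma> \<delta> g f = g - q \<star> f" "skew_rem \<sigma> \<delta> h f = h - q' \<star> f"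
    using skew_rem_decomp by (metis add_diff_cancel_left')
  have "g + h = (q + q') \<star> f + (skew_rem \<sigma> \<delta> g f + skew_rem \<sigma> \<delta> h f)"
    unfolding rem skew_mult_add_left by (simp add: algebra_simps)
  then show ?thesis
    by (metis skew_rem_eqI degree_add_le_max degree_skew_rem max_less_iff_conj le_less_trans)
qed

lemma skew_rem_diff:
  "skew_rem \<sigma> \<delta> (g - h) f = skew_rem \<sigma> \<delta> g f - skew_rem \<sigma> \<delta> h f"
  using skew_rem_add[of "g - h" h] by (simp add: algebra_simps)

lemma skew_rem_lscal: "skew_rem \<sigma> \<delta> (lscal c g) f = lscal c (skew_rem \<sigma> \<delta> g f)"
proof -
  obtain q where "g = q \<star> f + skew_rem \<sigma> \<delta> g f"
    using skew_rem_decomp by blast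
  then have "lscal c g = lscal c q \<star> f + lscal c (skew_rem \<sigma> \<delta> g f)"
    by (metis lscal_add skew_mult_lscal_left)
  then show ?thesis
    by (metis skew_rem_eqI degree_lscal_le degree_skew_rem le_less_trans)
qed

lemma skew_rem_linear_combination:
  "skew_rem \<sigma> \<delta> (\<Sum>j\<in>A. lscal (c j) (g j)) f = (\<Sum>j\<in>A. lscal (c j) (skew_rem \<sigma> \<delta> (g j) f))"
  by (induct A rule: infinite_finite_induct)
    (simp_all add: skew_rem_small degree_pos skew_rem_add skew_rem_lscal)

lemma one_notin_bound: "[:1:] \<notin> bound f"
proof
  assume "[:1:] \<in> bound f"
  then have "skew_rem \<sigma> \<delta> ([:1:] \<star> [:1:]) f = 0"
    unfolding bound_def skew_rem_eq_0_iff by blast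
  then show False
    using degree_pos by (simp add: skew_mult_const_left skew_rem_small)
qed

lemma exists_left_annihilator:
  fixes y :: "nat \<Rightarrow> 'a poly"
  shows "\<exists>p. p \<noteq> 0 \<and> (\<forall>i<n. p \<star> y i \<in> principal_left_ideal f)"
proof -
  define m where "m = degree f"
  define N where "N = n * m"
  define rem where "rem j i = skew_rem \<sigma> \<delta> ((T ^^ j) (y i)) f" for j i
  define v where "v j k = (if k < N then coeff (rem j (k div m)) (k mod m) else 0)" for j k
  obtain c where c_nz: "\<exists>j\<in>{..N}. c j \<noteq> 0" and c_rel: "\<forall>k. (\<Sum>j\<le>N. c j * v j k) = 0"
    using left_linear_dependence[of "{..N}" N v] by (auto simp: v_def)
  define p where "p = (\<Sum>j\<le>N. monom (c j) j)"
  have "p \<noteq> 0"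
  proof -
    obtain j0 where "j0 \<le> N" "c j0 \<noteq> 0"
      using c_nz by auto
    moreover have "coeff p j0 = c j0"
      using \<open>j0 \<le> N\<close> by (simp add: p_def coeff_sum)
    ultimately show ?thesis by auto
  qed
  moreover have "p \<star> y i \<in> principal_left_ideal f" if "i < n" for i
  proof -
    have "coeff (\<Sum>j\<le>N. lscal (c j) (rem j i)) k = 0" for k
    proof (cases "k < m")
      case True
      moreover have "Suc i * m \<le> n * m"
        using \<open>i < n\<close> by (metis Suc_leI mult_le_mono1)
      ultimately have "k + i * m < N" "(k + i * m) div m = i" "(k + i * m) mod m = k"
        by (simp_all add: N_def)
      then show ?thesis
        using c_rel[rule_format, of "k + i * m"] by (simp add: v_def coeff_sum)
    next
      case False
      then have "coeff (rem j i) k = 0" for j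
        using degree_skew_rem by (intro coeff_eq_0) (metis rem_def m_def not_less less_le_trans)
      then show ?thesis
        by (simp add: coeff_sum)
    qed
    then have "skew_rem \<sigma> \<delta> (p \<star> y i) f = 0"
      by (simp add: p_def skew_mult_sum_left skew_mult_monom_left skew_rem_linear_combination
          rem_def poly_eqI)
    then show ?thesis
      by (simp add: skew_rem_eq_0_iff)
  qed
  ultimately show ?thesis by blast
qed

lemma right_semi_invariant_if_right_nucleus:
  assumes "2 \<le> degree f" and "\<forall>c. [:c:] \<in> Sf_right_nucleus \<sigma> \<delta> f"
  shows "right_semi_invariant f"
  unfolding right_semi_invariant_def
proof
  fix c
  define m where "m = degree f"
  define h where "h = monom 1 m - f"
  have "degree h \<le> m" "coeff h m = 0"
    using monic by (simp_all add: h_def m_def degree_diff_le degree_monom_le)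
  then have deg_h: "degree h < m"
    using degree_pos by (simp add: m_def degree_less_if_top_coeff_0)
  have deg_hc: "degree (h \<star> [:c:]) < m" and deg_tc: "degree (monom 1 1 \<star> [:c:]) < m"
    using deg_h assms(1) degree_skew_mult_le[of h "[:c:]"]
      degree_skew_mult_le[of "monom 1 1" "[:c:]"] by (simp_all add: m_def degree_monom_eq)
  have "monom 1 (m - 1) \<in> Sf_carrier f" "monom 1 1 \<in> Sf_carrier f"
    using assms(1) by (simp_all add: Sf_carrier_def m_def degree_monom_eq)
  then have "Sf_assoc \<sigma> \<delta> f (monom 1 (m - 1)) (monom 1 1) [:c:] = 0"
    using assms(2) unfolding Sf_right_nucleus_def by blast
  moreover have "Sf_mult \<sigma> \<delta> f (monom 1 (m - 1)) (monom 1 1) = h"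
    unfolding Sf_mult_def
  proof (rule skew_rem_eqI[of _ _ "[:1:]"])
    show "degree h < degree f" using deg_h by (simp add: m_def)
    show "monom 1 (m - 1) \<star> monom 1 1 = [:1:] \<star> f + h"
      using degree_pos by (simp add: skew_mult_monom_1 m_def skew_mult_const_left h_def)
  qed
  moreover have "Sf_mult \<sigma> \<delta> f (monom 1 (m - 1)) (Sf_mult \<sigma> \<delta> f (monom 1 1) [:c:])
      = skew_rem \<sigma> \<delta> (monom 1 m \<star> [:c:]) f"
    using deg_tc degree_pos
    by (simp add: Sf_mult_def skew_rem_small m_def skew_mult_assoc[symmetric] skew_mult_monom_1)
  ultimately have "skew_rem \<sigma> \<delta> (monom 1 m \<star> [:c:]) f = h \<star> [:c:]"
    using deg_hc by (simp add: Sf_assoc_def Sf_mult_def skew_rem_small m_def)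
  moreover have "f \<star> [:c:] = monom 1 m \<star> [:c:] - h \<star> [:c:]"
    by (simp add: h_def skew_mult_diff_left)
  ultimately have "skew_rem \<sigma> \<delta> (f \<star> [:c:]) f = 0"
    using deg_hc by (simp add: skew_rem_diff skew_rem_small m_def)
  then show "f \<star> [:c:] \<in> principal_left_ideal f"
    by (simp add: skew_rem_eq_0_iff)
qed

lemma bound_nonzero:
  assumes "surj \<sigma>" and "right_semi_invariant f"
  shows "\<exists>p. p \<noteq> 0 \<and> p \<in> bound f"
proof -
  obtain p where "p \<noteq> 0" and p_t: "\<forall>i<degree f. p \<star> monom 1 i \<in> principal_left_ideal f"
    using exists_left_annihilator[of "degree f" "monom 1"] by blast
  have p_t_d: "p \<star> (monom 1 i \<star> [:d:]) \<in> principal_left_ideal f" if i: "i < degree f" for i d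
  proof -
    obtain s where "p \<star> monom 1 i = s \<star> f"
      using p_t i unfolding principal_left_ideal_def by auto
    then have "p \<star> (monom 1 i \<star> [:d:]) = s \<star> (f \<star> [:d:])"
      by (simp add: skew_mult_assoc[symmetric])
    then show ?thesis
      using assms(2) by (simp add: right_semi_invariant_def principal_left_ideal_skew_mult)
  qed
  have "p \<star> y \<in> principal_left_ideal f" for y
  proof -
    obtain q where q: "y = q \<star> f + skew_rem \<sigma> \<delta> y f"
      using skew_rem_decomp by blast
    obtain d where "skew_rem \<sigma> \<delta> y f = (\<Sum>i<degree f. monom 1 i \<star> [:d i:])"
      using exists_right_coeffs[OF assms(1)] degree_skew_rem[of y] coeff_eq_0
      by (metis le_less_trans not_le)
    then have "p \<star> y = (p \<star> q) \<star> f + (\<Sum>i<degree f. p \<star> (monom 1 i \<star> [:d i:]))"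
      by (subst q) (simp add: skew_mult_add_right skew_mult_assoc skew_mult_sum_right)
    then show ?thesis
      using p_t_d by (auto intro!: principal_left_ideal_add principal_left_ideal_sum)
  qed
  with \<open>p \<noteq> 0\<close> show ?thesis
    unfolding bound_def by blast
qed

lemma not_right_semi_invariant_if_simple:
  assumes "surj \<sigma>" and "skew_simple \<sigma> \<delta>"
  shows "\<not> right_semi_invariant f"
proof
  assume "right_semi_invariant f"
  then obtain p where "p \<noteq> 0" "p \<in> bound f"
    using bound_nonzero assms(1) by blast
  then show False
    using assms(2) skew_ideal_bound one_notin_bound unfolding skew_simple_def by blast
qed

end

theorem mainTheorem2:
  fixes \<sigma> \<delta> :: "'a::division_ring \<Rightarrow> 'a"
  assumes "ring_auto \<sigma>"
    and "left_sigma_derivation \<sigma> \<delta>"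
    and "skew_simple \<sigma> \<delta>"
  shows "\<not> (\<exists>f. lead_coeff f = 1 \<and> degree f \<ge> 2 \<and> Sf_nonassoc \<sigma> \<delta> f \<and>
                (\<forall>c. [:c:] \<in> Sf_right_nucleus \<sigma> \<delta> f))
       \<and> \<not> (\<exists>f. lead_coeff f = 1 \<and> degree f \<ge> 2 \<and> Sf_nonassoc \<sigma> \<delta> f \<and>
                (\<forall>c. [:c:] \<in> Sf_nucleus \<sigma> \<delta> f))"
proof -
  interpret skew_poly_ring \<sigma> \<delta>
    using assms(1,2) by unfold_locales (simp_all add: ring_auto_def)
  have "surj \<sigma>"
    using assms(1) by (simp add: ring_auto_def bij_is_surj)
  have "\<not> (\<forall>c. [:c:] \<in> Sf_right_nucleus \<sigma> \<delta> f)"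
    if "lead_coeff f = 1" and "2 \<le> degree f" for f
  proof -
    interpret skew_poly_monic \<sigma> \<delta> f
      using that by unfold_locales simp_all
    show ?thesis
      using right_semi_invariant_if_right_nucleus not_right_semi_invariant_if_simple
        \<open>surj \<sigma>\<close> assms(3) that(2) by blast
  qed
  moreover have "Sf_nucleus \<sigma> \<delta> f \<subseteq> Sf_right_nucleus \<sigma> \<delta> f" for f
    unfolding Sf_nucleus_def Sf_right_nucleus_def by blast
  ultimately show ?thesis
    by blast
qed

end
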